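(* Let $d\in\{4,5\}$ and let $(h_0,\dots,h_d)\in\mathbb{Z}^{d+1}$ satisfy $h_0=1$ and $h_i=h_{d-i}$ for all $i$; write $h(t)=\sum_{i=0}^dh_it^i=\sum_{i=0}^{2}\gamma_it^i(1+t)^{d-2i}$. If $(\gamma_0,\gamma_1,\gamma_2)$ is an $f$-vector, then $(h_0,\dots,h_d)$ is log-concave. If $(\gamma_0,\gamma_1,\gamma_2)$ is the $f$-vector of a balanced simplicial complex, then $h(t)$ is real-rooted.
   Context: An $f$-vector is the sequence $(f_0,f_1,\dots)$ counting the faces of cardinality $0,1,\dots$ of a simplicial complex. A pure simplicial complex of dimension $k$ is balanced if its vertices can be colored with $k+1$ colors so that no face contains two vertices of the same color; a sequence is the $f$-vector of a balanced complex if it is the $f$-vector of such a complex. A sequence $(h_i)$ is log-concave if $h_i^2\geqslant h_{i-1}h_{i+1}$ for all $0<i<d$. A polynomial is real-rooted if all its roots are real. *)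

theory Defs
  imports Complex_Main "HOL-Computational_Algebra.Polynomial"
begin

definition simplicial_complex :: "nat set set \<Rightarrow> bool" where
  "simplicial_complex K \<longleftrightarrow> finite K \<and> K \<noteq> {} \<and> (\<forall>F\<in>K. finite F) \<and>
     (\<forall>F\<in>K. \<forall>G. G \<subseteq> F \<longrightarrow> G \<in> K)"

definition face_count :: "nat set set \<Rightarrow> nat \<Rightarrow> nat" where
  "face_count K i = card {F\<in>K. card F = i}"

definition is_f_vector_of :: "int list \<Rightarrow> nat set set \<Rightarrow> bool" where
  "is_f_vector_of gs K \<longleftrightarrow>
     (\<forall>i. int (face_count K i) = (if i < length gs then gs ! i else 0))"

definition is_f_vector :: "int list \<Rightarrow> bool" where
  "is_f_vector gs \<longleftrightarrow> (\<exists>K. simplicial_complex K \<and> is_f_vector_of gs K)"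

text \<open>Pure of dimension r - 1: every facet (maximal face) has cardinality r.\<close>
definition pure_complex :: "nat set set \<Rightarrow> nat \<Rightarrow> bool" where
  "pure_complex K r \<longleftrightarrow>
     (\<forall>F\<in>K. (\<forall>G\<in>K. F \<subseteq> G \<longrightarrow> G = F) \<longrightarrow> card F = r)"

definition balanced_complex :: "nat set set \<Rightarrow> bool" where
  "balanced_complex K \<longleftrightarrow> simplicial_complex K \<and>
     (\<exists>r. pure_complex K r \<and>
        (\<exists>c :: nat \<Rightarrow> nat. (\<forall>v\<in>\<Union>K. c v < r) \<and> (\<forall>F\<in>K. inj_on c F)))"

definition is_balanced_f_vector :: "int list \<Rightarrow> bool" where
  "is_balanced_f_vector gs \<longleftrightarrow> (\<exists>K. balanced_complex K \<and> is_f_vector_of gs K)"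

definition log_concave_seq :: "(nat \<Rightarrow> int) \<Rightarrow> nat \<Rightarrow> bool" where
  "log_concave_seq h d \<longleftrightarrow> (\<forall>i. 0 < i \<and> i < d \<longrightarrow> h (i - 1) * h (i + 1) \<le> (h i)\<^sup>2)"

definition real_rooted :: "int poly \<Rightarrow> bool" where
  "real_rooted p \<longleftrightarrow> (\<forall>z::complex. poly (map_poly of_int p) z = 0 \<longrightarrow> z \<in> \<real>)"

end

theory Submission
  imports Defs
begin

text \<open>
  A simplicial complex with f-vector \<open>(1, n, g)\<close> has at most \<open>n choose 2 \<le> n\<^sup>2\<close> edges; if it
  is balanced and has an edge, it is pure of dimension one, so its graph is bipartite and
  \<open>4 g \<le> n\<^sup>2\<close>. Comparing coefficients gives \<open>h = (1, 4+n, 6+2n+g, 4+n, 1)\<close> for \<open>d = 4\<close>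
  and \<open>h = (1+t) h\<^sub>4\<close> for \<open>d = 5\<close>, and log-concavity becomes elementary. For real-rootedness,
  a root \<open>z\<close> of \<open>h\<^sub>4\<close> yields the root \<open>w = (1+z)\<^sup>2/z\<close> of \<open>w\<^sup>2 + n w + g\<close>, which is real and
  nonpositive since \<open>n\<^sup>2 \<ge> 4 g\<close> and \<open>n, g \<ge> 0\<close>; then \<open>z\<close> solves \<open>z\<^sup>2 + (2 - w) z + 1 = 0\<close>,
  whose discriminant \<open>(2 - w)\<^sup>2 - 4\<close> is nonnegative.
\<close>

lemma f_vector_of_nth:
  assumes "is_f_vector_of gs K" "i < length gs"
  shows "gs ! i = int (face_count K i)"
  using assms by (simp add: is_f_vector_of_def)

lemma card_face_less_length:
  assumes "is_f_vector_of gs K" "finite K" "F \<in> K"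
  shows "card F < length gs"
proof (rule ccontr)
  assume "\<not> card F < length gs"
  then have "int (face_count K (card F)) = 0"
    using assms(1) by (simp add: is_f_vector_of_def)
  then show False
    using assms(2,3) by (auto simp: face_count_def)
qed

lemma simplicial_complex_finite_vertices:
  assumes "simplicial_complex K"
  shows "finite (\<Union>K)"
  using assms by (simp add: simplicial_complex_def)

lemma face_count_1_eq_card_vertices:
  assumes "simplicial_complex K"
  shows "face_count K 1 = card (\<Union>K)"
proof -
  have "{F\<in>K. card F = 1} = (\<lambda>v. {v}) ` \<Union>K"
    using assms by (auto simp: card_1_singleton_iff simplicial_complex_def)
  then show ?thesis
    by (simp add: face_count_def card_image)
qed

lemma face_count_le_choose:
  assumes "simplicial_complex K"
  shows "face_count K k \<le> face_count K 1 choose k"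
proof -
  have "{F\<in>K. card F = k} \<subseteq> {B. B \<subseteq> \<Union>K \<and> card B = k}"
    by auto
  then have "face_count K k \<le> card {B. B \<subseteq> \<Union>K \<and> card B = k}"
    unfolding face_count_def
    by (rule card_mono[rotated]) (use simplicial_complex_finite_vertices[OF assms] in simp)
  also have "\<dots> = card (\<Union>K) choose k"
    using simplicial_complex_finite_vertices[OF assms] by (rule n_subsets)
  finally show ?thesis
    unfolding face_count_1_eq_card_vertices[OF assms] .
qed

lemma f_vector_edge_bound:
  assumes "is_f_vector [a, b, c]"
  shows "0 \<le> b \<and> 0 \<le> c \<and> c \<le> b\<^sup>2"
proof -
  obtain K where K: "simplicial_complex K" and f: "is_f_vector_of [a, b, c] K"
    using assms by (auto simp: is_f_vector_def)
  have "face_count K 2 \<le> face_count K 1 choose 2"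
    using K by (rule face_count_le_choose)
  also have "\<dots> \<le> (face_count K 1)\<^sup>2"
    by (cases "2 \<le> face_count K 1") (auto intro: binomial_le_pow simp: binomial_eq_0)
  finally have "int (face_count K 2) \<le> (int (face_count K 1))\<^sup>2"
    by (simp flip: of_nat_power)
  then show ?thesis
    using f_vector_of_nth[OF f, of 1] f_vector_of_nth[OF f, of 2] by simp
qed

lemma four_mult_le_sum_squared:
  fixes p q :: nat
  shows "4 * (p * q) \<le> (p + q)\<^sup>2"
proof -
  have "0 \<le> (int p - int q)\<^sup>2"
    by simp
  then have "int (4 * (p * q)) \<le> int ((p + q)\<^sup>2)"
    by (simp add: power2_eq_square algebra_simps)
  then show ?thesis
    by (simp only: of_nat_le_iff)
qed

lemma two_colourable_edge_bound:
  fixes col :: "nat \<Rightarrow> nat"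
  assumes K: "simplicial_complex K"
    and col: "\<forall>v\<in>\<Union>K. col v < 2" and proper: "\<forall>F\<in>K. inj_on col F"
  shows "4 * face_count K 2 \<le> (face_count K 1)\<^sup>2"
proof -
  define A where "A = {v\<in>\<Union>K. col v = 0}"
  define B where "B = {v\<in>\<Union>K. col v = 1}"
  have vertices: "\<Union>K = A \<union> B" "A \<inter> B = {}"
    using col by (auto simp: A_def B_def less_2_cases_iff)
  have fin: "finite A" "finite B"
    using simplicial_complex_finite_vertices[OF K] vertices(1) by (metis finite_Un)+
  have "{F\<in>K. card F = 2} \<subseteq> (\<lambda>(x, y). {x, y}) ` (A \<times> B)"
  proof
    fix F assume "F \<in> {F\<in>K. card F = 2}"
    then obtain x y where F: "F \<in> K" "F = {x, y}" "x \<noteq> y"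
      by (auto simp: card_2_iff)
    have "inj_on col {x, y}"
      using proper F by blast
    then have "col x \<noteq> col y"
      using F(3) by (simp add: inj_on_insert)
    moreover have "x \<in> \<Union>K" "y \<in> \<Union>K"
      using F by auto
    moreover from this have "col x < 2" "col y < 2"
      using col by blast+
    ultimately have "(x, y) \<in> A \<times> B \<or> (y, x) \<in> A \<times> B"
      unfolding A_def B_def by auto
    then show "F \<in> (\<lambda>(x, y). {x, y}) ` (A \<times> B)"
      using F(2) by (auto simp: image_iff insert_commute)
  qed
  then have "face_count K 2 \<le> card ((\<lambda>(x, y). {x, y}) ` (A \<times> B))"
    unfolding face_count_def using fin by (intro card_mono) auto
  also have "\<dots> \<le> card A * card B"
    using card_image_le[of "A \<times> B"] fin by (simp add: card_cartesian_product)
  finally have "4 * face_count K 2 \<le> 4 * (card A * card B)"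
    by simp
  also have "\<dots> \<le> (card A + card B)\<^sup>2"
    by (rule four_mult_le_sum_squared)
  also have "card A + card B = face_count K 1"
    unfolding face_count_1_eq_card_vertices[OF K] vertices(1)
    using fin vertices(2) by (rule card_Un_disjoint[symmetric])
  finally show ?thesis .
qed

lemma balanced_two_colourable:
  assumes "balanced_complex K" "\<forall>F\<in>K. card F \<le> 2" "E \<in> K" "card E = 2"
  obtains col :: "nat \<Rightarrow> nat" where "\<forall>v\<in>\<Union>K. col v < 2" "\<forall>F\<in>K. inj_on col F"
proof -
  obtain r col where pure: "pure_complex K r"
    and col: "\<forall>v\<in>\<Union>K. col v < r" "\<forall>F\<in>K. inj_on col F"
    using assms(1) by (auto simp: balanced_complex_def)
  have "G = E" if "G \<in> K" "E \<subseteq> G" for G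
  proof -
    have "finite G"
      using assms(1) that(1) by (auto simp: balanced_complex_def simplicial_complex_def)
    moreover from this have "card E \<le> card G"
      using that(2) by (rule card_mono)
    then have "card E = card G"
      using assms(2,4) that(1) by fastforce
    ultimately show "G = E"
      using that(2) by (metis card_subset_eq)
  qed
  then have "r = 2"
    using pure assms(3,4) unfolding pure_complex_def by metis
  then show thesis
    using col by (intro that) simp_all
qed

lemma balanced_f_vector_edge_bound:
  assumes "is_balanced_f_vector [a, b, c]"
  shows "0 \<le> b \<and> 0 \<le> c \<and> 4 * c \<le> b\<^sup>2"
proof -
  obtain K where K: "balanced_complex K" and f: "is_f_vector_of [a, b, c] K"
    using assms by (auto simp: is_balanced_f_vector_def)
  have sc: "simplicial_complex K"
    using K by (simp add: balanced_complex_def)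
  then have "finite K"
    by (simp add: simplicial_complex_def)
  have "4 * face_count K 2 \<le> (face_count K 1)\<^sup>2"
  proof (cases "face_count K 2 = 0")
    case False
    then have "{F\<in>K. card F = 2} \<noteq> {}"
      by (metis card.empty face_count_def)
    then obtain E where E: "E \<in> K" "card E = 2"
      by blast
    have "\<forall>F\<in>K. card F \<le> 2"
      using card_face_less_length[OF f \<open>finite K\<close>] by fastforce
    then obtain col :: "nat \<Rightarrow> nat"
      where "\<forall>v\<in>\<Union>K. col v < 2" "\<forall>F\<in>K. inj_on col F"
      by (rule balanced_two_colourable[OF K _ E])
    then show ?thesis
      by (rule two_colourable_edge_bound[OF sc])
  qed simp
  then have "4 * int (face_count K 2) \<le> (int (face_count K 1))\<^sup>2"
    by (simp flip: of_nat_power)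
  then show ?thesis
    using f_vector_of_nth[OF f, of 1] f_vector_of_nth[OF f, of 2] by simp
qed

lemma Reals_if_square_nonneg:
  fixes x :: complex
  assumes "x\<^sup>2 = of_real c" "0 \<le> c"
  shows "x \<in> \<real>"
proof -
  have "x\<^sup>2 = (of_real (sqrt c))\<^sup>2"
    using assms by (simp flip: of_real_power)
  then show ?thesis
    by (auto simp: power2_eq_iff)
qed

lemma quadratic_root_real:
  fixes z :: complex and b c :: real
  assumes "z\<^sup>2 + of_real b * z + of_real c = 0" "4 * c \<le> b\<^sup>2"
  shows "z \<in> \<real>"
proof -
  have "(2 * z + of_real b)\<^sup>2 = 4 * (z\<^sup>2 + of_real b * z + of_real c) + of_real (b\<^sup>2 - 4 * c)"
    by (simp add: power2_eq_square algebra_simps)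
  then have "(2 * z + of_real b)\<^sup>2 = of_real (b\<^sup>2 - 4 * c)"
    using assms(1) by simp
  then have "2 * z + of_real b \<in> \<real>"
    by (rule Reals_if_square_nonneg) (use assms(2) in simp)
  moreover have "z = (2 * z + of_real b - of_real b) / 2"
    by simp
  ultimately show ?thesis
    by (metis Reals_diff Reals_divide Reals_numeral Reals_of_real)
qed

lemma gamma_quartic_root_real:
  fixes z :: complex and n g :: real
  assumes "0 \<le> n" "0 \<le> g" "4 * g \<le> n\<^sup>2"
    and root: "(1 + z) ^ 4 + of_real n * z * (1 + z)\<^sup>2 + of_real g * z\<^sup>2 = 0"
  shows "z \<in> \<real>"
proof -
  have "z \<noteq> 0"
    using root by auto
  define w where "w = (1 + z)\<^sup>2 / z"
  have w: "(1 + z)\<^sup>2 = w * z"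
    using \<open>z \<noteq> 0\<close> by (simp add: w_def)
  have "(1 + z) ^ 4 = ((1 + z)\<^sup>2)\<^sup>2"
    by (simp flip: power_mult)
  then have "(w * z)\<^sup>2 + of_real n * z * (w * z) + of_real g * z\<^sup>2 = 0"
    using root unfolding w by (simp only:)
  moreover have "(w * z)\<^sup>2 + of_real n * z * (w * z) + of_real g * z\<^sup>2 =
      z\<^sup>2 * (w\<^sup>2 + of_real n * w + of_real g)"
    by (simp add: power2_eq_square algebra_simps)
  ultimately have "w\<^sup>2 + of_real n * w + of_real g = 0"
    using \<open>z \<noteq> 0\<close> by simp
  moreover from this have "w \<in> \<real>"
    using assms(3) by (rule quadratic_root_real)
  then obtain a where a: "w = of_real a"
    by (auto elim: Reals_cases)
  ultimately have "of_real (a\<^sup>2 + n * a + g) = (0 :: complex)"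
    by simp
  then have a_root: "a\<^sup>2 + n * a + g = 0"
    by (simp only: of_real_eq_0_iff)
  have "a \<le> 0"
  proof (rule ccontr)
    assume "\<not> a \<le> 0"
    then have "0 < a\<^sup>2" "0 \<le> n * a"
      using assms(1) by simp_all
    then show False
      using a_root assms(2) by linarith
  qed
  have "z\<^sup>2 + of_real (2 - a) * z + of_real 1 = (1 + z)\<^sup>2 - w * z"
    unfolding a by (simp add: power2_eq_square algebra_simps)
  then have "z\<^sup>2 + of_real (2 - a) * z + of_real 1 = 0"
    using w by simp
  moreover have "4 * 1 \<le> (2 - a)\<^sup>2"
    using \<open>a \<le> 0\<close> power_mono[of 2 "2 - a" 2] by simp
  ultimately show ?thesis
    by (rule quadratic_root_real)
qed

lemma real_rooted_gamma_deg4: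
  fixes n g :: int
  assumes "0 \<le> n" "0 \<le> g" "4 * g \<le> n\<^sup>2"
  shows "real_rooted [:1, 4 + n, 6 + 2 * n + g, 4 + n, 1:]"
  unfolding real_rooted_def
proof (intro allI impI)
  fix z :: complex
  assume "poly (map_poly of_int [:1, 4 + n, 6 + 2 * n + g, 4 + n, 1:]) z = 0"
  then have "(1 + z) ^ 4 + of_real (of_int n) * z * (1 + z)\<^sup>2 + of_real (of_int g) * z\<^sup>2 = 0"
    by (simp add: map_poly_pCons power2_eq_square power4_eq_xxxx algebra_simps)
  then show "z \<in> \<real>"
    by (rule gamma_quartic_root_real[rotated 3]) (use assms in \<open>simp_all flip: of_int_power\<close>)
qed

lemma real_rooted_gamma_deg5:
  fixes n g :: int
  assumes "0 \<le> n" "0 \<le> g" "4 * g \<le> n\<^sup>2"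
  shows "real_rooted [:1, 5 + n, 10 + 3 * n + g, 10 + 3 * n + g, 5 + n, 1:]"
  unfolding real_rooted_def
proof (intro allI impI)
  fix z :: complex
  assume "poly (map_poly of_int [:1, 5 + n, 10 + 3 * n + g, 10 + 3 * n + g, 5 + n, 1:]) z = 0"
  moreover have "poly (map_poly of_int [:1, 5 + n, 10 + 3 * n + g, 10 + 3 * n + g, 5 + n, 1:]) z
      = (1 + z) * poly (map_poly of_int [:1, 4 + n, 6 + 2 * n + g, 4 + n, 1:]) z"
    by (simp add: map_poly_pCons algebra_simps)
  ultimately have "z = -1 \<or> poly (map_poly of_int [:1, 4 + n, 6 + 2 * n + g, 4 + n, 1:]) z = 0"
    by (auto simp: add_eq_0_iff)
  then show "z \<in> \<real>"
    using real_rooted_gamma_deg4[OF assms] by (auto simp: real_rooted_def)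
qed

lemma log_concave_seq_cong:
  assumes "\<And>i. i \<le> d \<Longrightarrow> h i = h' i"
  shows "log_concave_seq h d \<longleftrightarrow> log_concave_seq h' d"
proof -
  have "h (i - 1) = h' (i - 1) \<and> h i = h' i \<and> h (i + 1) = h' (i + 1)" if "i < d" for i
    using that assms by simp
  then show ?thesis
    unfolding log_concave_seq_def by (metis (no_types, opaque_lifting))
qed

lemma log_concave_gamma_deg4:
  fixes n g :: int
  assumes "0 \<le> n" "0 \<le> g" "g \<le> n\<^sup>2"
  shows "log_concave_seq (coeff [:1, 4 + n, 6 + 2 * n + g, 4 + n, 1:]) 4"
proof -
  have "6 + 2 * n + g \<le> (4 + n)\<^sup>2"
    using assms by (simp add: power2_eq_square algebra_simps)
  moreover have "(4 + n)\<^sup>2 \<le> (6 + 2 * n + g)\<^sup>2"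
    using assms by (intro power_mono) auto
  ultimately show ?thesis
    by (auto simp: log_concave_seq_def numeral_eq_Suc less_Suc_eq power2_eq_square)
qed

lemma log_concave_gamma_deg5:
  fixes n g :: int
  assumes "0 \<le> n" "0 \<le> g" "g \<le> n\<^sup>2"
  shows "log_concave_seq (coeff [:1, 5 + n, 10 + 3 * n + g, 10 + 3 * n + g, 5 + n, 1:]) 5"
proof -
  have "10 + 3 * n + g \<le> (5 + n)\<^sup>2"
    using assms by (simp add: power2_eq_square algebra_simps)
  moreover have "(5 + n) * (10 + 3 * n + g) \<le> (10 + 3 * n + g) * (10 + 3 * n + g)"
    using assms by (intro mult_right_mono) auto
  ultimately show ?thesis
    by (auto simp: log_concave_seq_def numeral_eq_Suc less_Suc_eq power2_eq_square mult.commute)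
qed

lemma coeff_sum_monom:
  "coeff (\<Sum>i\<le>d. monom (h i) i) k = (if k \<le> d then h k else 0)"
  by (simp add: coeff_sum)

lemma gamma_expansion_deg4:
  fixes \<gamma> :: "nat \<Rightarrow> 'a::comm_ring_1"
  shows "(\<Sum>i\<le>2. smult (\<gamma> i) (monom 1 i * [:1, 1:] ^ (4 - 2 * i))) =
    [:\<gamma> 0, 4 * \<gamma> 0 + \<gamma> 1, 6 * \<gamma> 0 + 2 * \<gamma> 1 + \<gamma> 2, 4 * \<gamma> 0 + \<gamma> 1, \<gamma> 0:]"
  by (simp add: numeral_eq_Suc monom_Suc monom_0 algebra_simps)

lemma gamma_expansion_deg5:
  fixes \<gamma> :: "nat \<Rightarrow> 'a::comm_ring_1"
  shows "(\<Sum>i\<le>2. smult (\<gamma> i) (monom 1 i * [:1, 1:] ^ (5 - 2 * i))) =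
    [:\<gamma> 0, 5 * \<gamma> 0 + \<gamma> 1, 10 * \<gamma> 0 + 3 * \<gamma> 1 + \<gamma> 2, 10 * \<gamma> 0 + 3 * \<gamma> 1 + \<gamma> 2,
      5 * \<gamma> 0 + \<gamma> 1, \<gamma> 0:]"
  by (simp add: numeral_eq_Suc monom_Suc monom_0 algebra_simps)

theorem corollary8p3:
  fixes d :: nat and h \<gamma> :: "nat \<Rightarrow> int"
  assumes "d \<in> {4, 5}"
    and "h 0 = 1"
    and "\<forall>i\<le>d. h i = h (d - i)"
    and "(\<Sum>i\<le>d. monom (h i) i) =
         (\<Sum>i\<le>2. smult (\<gamma> i) (monom 1 i * [:1, 1:] ^ (d - 2 * i)))"
  shows "(is_f_vector [\<gamma> 0, \<gamma> 1, \<gamma> 2] \<longrightarrow> log_concave_seq h d) \<and>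
         (is_balanced_f_vector [\<gamma> 0, \<gamma> 1, \<gamma> 2] \<longrightarrow>
            real_rooted (\<Sum>i\<le>d. monom (h i) i))"
proof -
  let ?h = "\<Sum>i\<le>d. monom (h i) i"
  have "coeff ?h 0 = \<gamma> 0"
    using assms(1) unfolding assms(4) by (auto simp: gamma_expansion_deg4 gamma_expansion_deg5)
  then have "\<gamma> 0 = 1"
    using assms(2) by (simp add: coeff_sum_monom)
  then have h_poly: "d = 4 \<and> ?h = [:1, 4 + \<gamma> 1, 6 + 2 * \<gamma> 1 + \<gamma> 2, 4 + \<gamma> 1, 1:] \<or>
      d = 5 \<and> ?h = [:1, 5 + \<gamma> 1, 10 + 3 * \<gamma> 1 + \<gamma> 2, 10 + 3 * \<gamma> 1 + \<gamma> 2, 5 + \<gamma> 1, 1:]"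
    using assms(1) unfolding assms(4) by (auto simp: gamma_expansion_deg4 gamma_expansion_deg5)
  have "log_concave_seq h d \<longleftrightarrow> log_concave_seq (coeff ?h) d"
    by (rule log_concave_seq_cong) (simp add: coeff_sum_monom)
  then have "is_f_vector [\<gamma> 0, \<gamma> 1, \<gamma> 2] \<longrightarrow> log_concave_seq h d"
    using h_poly f_vector_edge_bound log_concave_gamma_deg4 log_concave_gamma_deg5 by auto
  moreover have "is_balanced_f_vector [\<gamma> 0, \<gamma> 1, \<gamma> 2] \<longrightarrow> real_rooted ?h"
    using h_poly balanced_f_vector_edge_bound real_rooted_gamma_deg4 real_rooted_gamma_deg5 by auto
  ultimately show ?thesis
    by blast
qed

end
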